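(* For $\lambda,\mu,\nu\in\mathcal{A}_{k,n}$, $$N^\nu_{\lambda\mu}=\sum_{\boldsymbol{\nu}}c^{\boldsymbol{\nu}}_{\boldsymbol{\lambda}\boldsymbol{\mu}}\frac{f_{\boldsymbol{\nu}}}{f_{\boldsymbol{\lambda}}f_{\boldsymbol{\mu}}},$$ where the sum runs over all $n$-multipartitions $\boldsymbol{\nu}$ with $|\nu^{(i)}|=m_i(\nu)$ for $i=1,\dots,n$, and $\boldsymbol{\lambda},\boldsymbol{\mu}$ are any $n$-multipartitions with $|\lambda^{(i)}|=m_i(\lambda)$ and $|\mu^{(i)}|=m_i(\mu)$ for all $i$.
   Context: Fix $k,n\ge1$ and a primitive $n$-th root of unity $\zeta$. $\mathcal{A}_{k,n}$ is the set of integer vectors $\lambda=(\lambda_1,\dots,\lambda_k)$ with $n\ge\lambda_1\ge\cdots\ge\lambda_k>0$; $m_i(\lambda)$ is the multiplicity of $i$, $|\lambda|=\sum\lambda_i$; $S_\lambda$ is its stabiliser in $S_k$ under $\lambda\circ w=(\lambda_{w(1)},\dots,\lambda_{w(k)})$ and $S^\lambda$ the minimal length representatives of $S_\lambda\backslash S_k$. $N^\nu_{\lambda\mu}=\#\{(w,w')\in S^\lambda\times S^\mu:\lambda\circ w+\mu\circ w'=(\nu_i+n\alpha_i)_{i=1}^k\text{ for some }\alpha\in\mathbb{Z}^k,\ \sum\alpha_i=(|\lambda|+|\mu|-|\nu|)/n\}$. The generalised symmetric group is $S(n,k)=\mathcal{C}_n^{\times k}\rtimes S_k$ ($\mathcal{C}_n$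 cyclic of order $n$); $y_i$ denotes the generator of the $i$-th copy of $\mathcal{C}_n$ and $y^\alpha=y_1^{\alpha_1}\cdots y_k^{\alpha_k}$. An $n$-multipartition of $k$ is $\boldsymbol{\lambda}=(\lambda^{(1)},\dots,\lambda^{(n)})$ with $\sum|\lambda^{(i)}|=k$; $f_{\boldsymbol{\lambda}}=\prod_if_{\lambda^{(i)}}$ with $f_{\lambda^{(i)}}$ the number of standard Young tableaux of shape $\lambda^{(i)}$. The simple $S(n,k)$-modules $\mathcal{L}(\boldsymbol{\lambda})$ are labelled by $n$-multipartitions of $k$ so that $\operatorname{Tr}_{\mathcal{L}(\boldsymbol{\lambda})}y^\alpha=f_{\boldsymbol{\lambda}}\,m_\lambda(\zeta^\alpha)$ for all $\alpha\in\mathbb{Z}_n^{k}$, where $\lambda\in\mathcal{A}_{k,n}$ is the unique element with $m_i(\lambda)=|\lambda^{(i)}|$ and $m_\lambda(\zeta^\alpha)$ is the monomial symmetric polynomial evaluated at $(\zeta^{\alpha_1},\dots,\zeta^{\alpha_k})$. $c^{\boldsymbol{\nu}}_{\boldsymbol{\lambda}\boldsymbol{\mu}}$ are the structure constants of the representation ring: $\mathcal{L}(\boldsymbol{\lambda})\otimes\mathcal{L}(\boldsymbol{\mu})\cong\bigoplus_{\boldsymbol{\nu}}\mathcal{L}(\boldsymbol{\nu})^{\oplus c^{\boldsymbol{\nu}}_{\boldsymbol{\lambda}\boldsymbol{\mu}}}$. *)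

theory Defs
  imports Complex_Main "HOL-Combinatorics.Permutations" "Jordan_Normal_Form.Matrix"
begin

text \<open>Integer vectors are functions on the index set {1..k}, extended by 0 outside.\<close>

definition Akn :: "nat \<Rightarrow> nat \<Rightarrow> (nat \<Rightarrow> nat) set" where
  "Akn k n = {lam. (\<forall>i\<in>{1..k}. 0 < lam i \<and> lam i \<le> n) \<and>
                   (\<forall>i j. 1 \<le> i \<longrightarrow> i \<le> j \<longrightarrow> j \<le> k \<longrightarrow> lam j \<le> lam i) \<and>
                   (\<forall>i. i \<notin> {1..k} \<longrightarrow> lam i = 0)}"

definition mult_of :: "nat \<Rightarrow> (nat \<Rightarrow> nat) \<Rightarrow> nat \<Rightarrow> nat" where
  "mult_of k lam i = card {j\<in>{1..k}. lam j = i}"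

definition vsize :: "nat \<Rightarrow> (nat \<Rightarrow> nat) \<Rightarrow> nat" where
  "vsize k lam = (\<Sum>i=1..k. lam i)"

text \<open>Permutations of {1..k}, acting by lam o w = (lam (w 1), ..., lam (w k)).\<close>

definition Sk :: "nat \<Rightarrow> (nat \<Rightarrow> nat) set" where
  "Sk k = {w. w permutes {1..k}}"

definition stab :: "nat \<Rightarrow> (nat \<Rightarrow> nat) \<Rightarrow> (nat \<Rightarrow> nat) set" where
  "stab k lam = {u \<in> Sk k. lam \<circ> u = lam}"

definition perm_length :: "nat \<Rightarrow> (nat \<Rightarrow> nat) \<Rightarrow> nat" where
  "perm_length k w = card {(i, j). 1 \<le> i \<and> i < j \<and> j \<le> k \<and> w j < w i}"

text \<open>Minimal length representatives of the right cosets S_lam w = {u o w | u in S_lam}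
  (note lam o (u o w) = (lam o u) o w).\<close>
definition min_reps :: "nat \<Rightarrow> (nat \<Rightarrow> nat) \<Rightarrow> (nat \<Rightarrow> nat) set" where
  "min_reps k lam = {w \<in> Sk k. \<forall>u \<in> stab k lam. perm_length k w \<le> perm_length k (u \<circ> w)}"

definition Ncoef :: "nat \<Rightarrow> nat \<Rightarrow> (nat \<Rightarrow> nat) \<Rightarrow> (nat \<Rightarrow> nat) \<Rightarrow> (nat \<Rightarrow> nat) \<Rightarrow> nat" where
  "Ncoef k n nu lam mu = card {(w, w'). w \<in> min_reps k lam \<and> w' \<in> min_reps k mu \<and>
      (\<exists>\<alpha> :: nat \<Rightarrow> int.
         (\<forall>i\<in>{1..k}. int (lam (w i)) + int (mu (w' i)) = int (nu i) + int n * \<alpha> i) \<and>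
         int n * (\<Sum>i=1..k. \<alpha> i) = int (vsize k lam) + int (vsize k mu) - int (vsize k nu))}"

text \<open>Monomial symmetric polynomial m_lam evaluated at (x_1,...,x_k):
  sum over the distinct rearrangements beta of lam of prod x_i ^ beta_i.\<close>
definition monsym :: "nat \<Rightarrow> (nat \<Rightarrow> nat) \<Rightarrow> (nat \<Rightarrow> complex) \<Rightarrow> complex" where
  "monsym k lam x = (\<Sum>\<beta>\<in>{lam \<circ> w | w. w \<in> Sk k}. \<Prod>i=1..k. x i ^ \<beta> i)"

definition is_partition :: "nat list \<Rightarrow> bool" where
  "is_partition p \<longleftrightarrow> sorted_wrt (\<ge>) p \<and> (\<forall>x\<in>set p. 0 < x)"

definition cells :: "nat list \<Rightarrow> (nat \<times> nat) set" where
  "cells p = {(i, j). i < length p \<and> j < p ! i}"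

definition SYT :: "nat list \<Rightarrow> (nat \<times> nat \<Rightarrow> nat) set" where
  "SYT p = {T. bij_betw T (cells p) {1..sum_list p} \<and>
               (\<forall>c. c \<notin> cells p \<longrightarrow> T c = 0) \<and>
               (\<forall>i j. (i, Suc j) \<in> cells p \<longrightarrow> T (i, j) < T (i, Suc j)) \<and>
               (\<forall>i j. (Suc i, j) \<in> cells p \<longrightarrow> T (i, j) < T (Suc i, j))}"

definition fSYT :: "nat list \<Rightarrow> nat" where
  "fSYT p = card (SYT p)"

definition multipartitions :: "nat \<Rightarrow> nat \<Rightarrow> (nat \<Rightarrow> nat list) set" where
  "multipartitions n k = {P. (\<forall>i\<in>{1..n}. is_partition (P i)) \<and> (\<forall>i. i \<notin> {1..n} \<longrightarrow> P i = []) \<and>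
                              (\<Sum>i=1..n. sum_list (P i)) = k}"

definition fmulti :: "nat \<Rightarrow> (nat \<Rightarrow> nat list) \<Rightarrow> nat" where
  "fmulti n P = (\<Prod>i=1..n. fSYT (P i))"

text \<open>The unique element of A_{k,n} attached to a multipartition: m_i(lam) = |lam^(i)|.\<close>
definition has_shape :: "nat \<Rightarrow> nat \<Rightarrow> (nat \<Rightarrow> nat list) \<Rightarrow> (nat \<Rightarrow> nat) \<Rightarrow> bool" where
  "has_shape k n P lam \<longleftrightarrow> (\<forall>i\<in>{1..n}. sum_list (P i) = mult_of k lam i)"

text \<open>Elements (alpha, w): alpha in Z_n^k (values in {0..<n} on {1..k}, 0 outside),
  w a permutation of {1..k}; multiplication of the semidirect product
  (alpha, w)(beta, v) = (alpha + w.beta, w o v) with (w.beta)_i = beta_(w^-1 i).\<close>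

type_synonym gsym = "(nat \<Rightarrow> nat) \<times> (nat \<Rightarrow> nat)"

definition Snk :: "nat \<Rightarrow> nat \<Rightarrow> gsym set" where
  "Snk n k = {(\<alpha>, w). (\<forall>i\<in>{1..k}. \<alpha> i < n) \<and> (\<forall>i. i \<notin> {1..k} \<longrightarrow> \<alpha> i = 0) \<and> w permutes {1..k}}"

definition gmult :: "nat \<Rightarrow> nat \<Rightarrow> gsym \<Rightarrow> gsym \<Rightarrow> gsym" where
  "gmult n k g h = (case g of (\<alpha>, w) \<Rightarrow> case h of (\<beta>, v) \<Rightarrow>
     ((\<lambda>i. if i \<in> {1..k} then (\<alpha> i + \<beta> (Hilbert_Choice.inv w i)) mod n else 0), w \<circ> v))"

definition gone :: gsym where
  "gone = ((\<lambda>_. 0), id)"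

definition ypow :: "(nat \<Rightarrow> nat) \<Rightarrow> gsym" where
  "ypow \<alpha> = (\<alpha>, id)"

type_synonym rep = "nat \<times> (gsym \<Rightarrow> complex mat)"

definition is_rep :: "nat \<Rightarrow> nat \<Rightarrow> rep \<Rightarrow> bool" where
  "is_rep n k R \<longleftrightarrow> (case R of (d, \<rho>) \<Rightarrow>
     (\<forall>g\<in>Snk n k. \<rho> g \<in> carrier_mat d d) \<and> \<rho> gone = 1\<^sub>m d \<and>
     (\<forall>g\<in>Snk n k. \<forall>h\<in>Snk n k. \<rho> (gmult n k g h) = \<rho> g * \<rho> h))"

definition is_subspace :: "nat \<Rightarrow> complex vec set \<Rightarrow> bool" where
  "is_subspace d W \<longleftrightarrow> W \<subseteq> carrier_vec d \<and> 0\<^sub>v d \<in> W \<and>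
     (\<forall>v\<in>W. \<forall>w\<in>W. v + w \<in> W) \<and> (\<forall>c. \<forall>v\<in>W. c \<cdot>\<^sub>v v \<in> W)"

definition irreducible_rep :: "nat \<Rightarrow> nat \<Rightarrow> rep \<Rightarrow> bool" where
  "irreducible_rep n k R \<longleftrightarrow> is_rep n k R \<and> (case R of (d, \<rho>) \<Rightarrow> 0 < d \<and>
     (\<forall>W. is_subspace d W \<and> (\<forall>g\<in>Snk n k. \<forall>v\<in>W. \<rho> g *\<^sub>v v \<in> W) \<longrightarrow>
          W = {0\<^sub>v d} \<or> W = carrier_vec d))"

definition iso_rep :: "nat \<Rightarrow> nat \<Rightarrow> rep \<Rightarrow> rep \<Rightarrow> bool" where
  "iso_rep n k R S \<longleftrightarrow> fst R = fst S \<and>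
     (\<exists>P \<in> carrier_mat (fst R) (fst R). invertible_mat P \<and>
        (\<forall>g\<in>Snk n k. P * snd R g = snd S g * P))"

definition kron :: "complex mat \<Rightarrow> complex mat \<Rightarrow> complex mat" where
  "kron A B = mat (dim_row A * dim_row B) (dim_col A * dim_col B)
     (\<lambda>(i, j). A $$ (i div dim_row B, j div dim_col B) * B $$ (i mod dim_row B, j mod dim_col B))"

definition tensor_rep :: "rep \<Rightarrow> rep \<Rightarrow> rep" where
  "tensor_rep R S = (fst R * fst S, \<lambda>g. kron (snd R g) (snd S g))"

definition dsum_rep :: "rep \<Rightarrow> rep \<Rightarrow> rep" where
  "dsum_rep R S = (fst R + fst S,
     \<lambda>g. four_block_mat (snd R g) (0\<^sub>m (fst R) (fst S)) (0\<^sub>m (fst S) (fst R)) (snd S g))"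

definition zero_rep :: rep where
  "zero_rep = (0, \<lambda>_. 1\<^sub>m 0)"

definition dsum_list :: "rep list \<Rightarrow> rep" where
  "dsum_list Rs = foldr dsum_rep Rs zero_rep"

definition mat_trace :: "complex mat \<Rightarrow> complex" where
  "mat_trace A = (\<Sum>i<dim_row A. A $$ (i, i))"

end

theory Submission
  imports Defs
begin

(* Both sides are read off from traces at the diagonal elements y^alpha, alpha in Z_n^k.
   Taking traces in L(lam) (x) L(mu) = (+) c L(nu) at y^alpha gives
     f_lam f_mu m_lam(zeta^alpha) m_mu(zeta^alpha) = sum c f_nu m_nu(zeta^alpha).
   Multiplying by zeta^(-alpha.nu) and summing over alpha, orthogonality of the characters of
   C_n^k keeps on the right only the multipartitions of shape nu (the exponents lie in 1..n, and
   distinct elements of A_{k,n} have disjoint sets of rearrangements), and produces on the left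
   n^k times the number of pairs (beta, gamma) of rearrangements of lam and mu with
   beta + gamma = nu mod n. These pairs correspond bijectively to the pairs of minimal coset
   representatives counted by N. *)

section \<open>Traces of matrix representations\<close>

lemma mat_trace_mult_comm:
  assumes A: "A \<in> carrier_mat n m" and B: "B \<in> carrier_mat m n"
  shows "mat_trace (A * B) = mat_trace (B * A)"
proof -
  have "mat_trace (A * B) = (\<Sum>i<n. \<Sum>j<m. A $$ (i, j) * B $$ (j, i))"
    using A B by (simp add: mat_trace_def scalar_prod_def atLeast0LessThan)
  also have "\<dots> = (\<Sum>j<m. \<Sum>i<n. B $$ (j, i) * A $$ (i, j))"
    by (subst sum.swap) (simp add: mult.commute)
  also have "\<dots> = mat_trace (B * A)"
    using A B by (simp add: mat_trace_def scalar_prod_def atLeast0LessThan)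
  finally show ?thesis .
qed

lemma mat_trace_similar:
  assumes P: "P \<in> carrier_mat d d" "invertible_mat P"
    and A: "A \<in> carrier_mat d d" and B: "B \<in> carrier_mat d d"
    and PA: "P * A = B * P"
  shows "mat_trace A = mat_trace B"
proof -
  obtain Q where PQ: "P * Q = 1\<^sub>m d" and QP: "Q * P = 1\<^sub>m (dim_row Q)"
    using P unfolding invertible_mat_def inverts_mat_def by auto
  have "dim_col Q = d" "dim_row Q = d"
    using PQ QP P by (metis index_mult_mat(3) index_one_mat(3), metis index_mult_mat(3) index_one_mat(3) carrier_matD(2))
  then have Q: "Q \<in> carrier_mat d d" by auto
  have "A = (Q * P) * A"
    using QP A \<open>dim_row Q = d\<close> by simp
  also have "\<dots> = Q * (B * P)"
    using Q P A PA by (simp add: assoc_mult_mat)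
  finally have "mat_trace A = mat_trace ((B * P) * Q)"
    using mat_trace_mult_comm[OF Q, of "B * P"] B P by simp
  also have "(B * P) * Q = B"
    using B P Q PQ by (simp add: assoc_mult_mat)
  finally show ?thesis .
qed

lemma sum_lessThan_mult_div_mod:
  fixes a b :: nat
  shows "(\<Sum>i<a * b. f (i div b) (i mod b)) = (\<Sum>i<a. \<Sum>j<b. f i j :: 'c::comm_monoid_add)"
proof (induction a)
  case (Suc a)
  have "(\<Sum>i\<in>{a * b..<a * b + b}. f (i div b) (i mod b)) = (\<Sum>j<b. f a j)"
    using sum.shift_bounds_nat_ivl[of "\<lambda>i. f (i div b) (i mod b)" 0 "a * b" b]
    by (simp add: atLeast0LessThan add.commute)
  moreover have "{..<Suc a * b} = {..<a * b} \<union> {a * b..<a * b + b}" by auto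
  ultimately show ?case
    using Suc by (simp add: sum.union_disjoint ivl_disj_int)
qed simp

lemma mat_trace_kron:
  assumes A: "A \<in> carrier_mat a a" and B: "B \<in> carrier_mat b b"
  shows "mat_trace (kron A B) = mat_trace A * mat_trace B"
proof -
  have "mat_trace (kron A B) = (\<Sum>i<a * b. A $$ (i div b, i div b) * B $$ (i mod b, i mod b))"
    using A B by (simp add: mat_trace_def kron_def)
  also have "\<dots> = (\<Sum>i<a. \<Sum>j<b. A $$ (i, i) * B $$ (j, j))"
    by (rule sum_lessThan_mult_div_mod)
  also have "\<dots> = mat_trace A * mat_trace B"
    using A B by (simp add: mat_trace_def sum_product)
  finally show ?thesis .
qed

lemma mat_trace_four_block_mat:
  assumes A: "A \<in> carrier_mat a a" and D: "D \<in> carrier_mat d d"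
  shows "mat_trace (four_block_mat A (0\<^sub>m a d) (0\<^sub>m d a) D) = mat_trace A + mat_trace D"
proof -
  have "mat_trace (four_block_mat A (0\<^sub>m a d) (0\<^sub>m d a) D)
      = (\<Sum>i<a + d. if i < a then A $$ (i, i) else D $$ (i - a, i - a))"
    using A D by (simp add: mat_trace_def four_block_mat_def Let_def, intro sum.cong refl, auto)
  also have "\<dots> = (\<Sum>i<a. A $$ (i, i)) + (\<Sum>i\<in>{a..<a + d}. D $$ (i - a, i - a))"
    by (simp add: sum.atLeastLessThan_concat[of 0 a "a + d", symmetric, simplified atLeast0LessThan[symmetric]]
        atLeast0LessThan[symmetric])
  also have "(\<Sum>i\<in>{a..<a + d}. D $$ (i - a, i - a)) = (\<Sum>i<d. D $$ (i, i))"
    using sum.shift_bounds_nat_ivl[of "\<lambda>i. D $$ (i - a, i - a)" 0 a d]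
    by (simp add: atLeast0LessThan add.commute)
  finally show ?thesis
    using A D by (simp add: mat_trace_def)
qed

lemma dsum_list_carrier:
  assumes "\<forall>R\<in>set Rs. snd R g \<in> carrier_mat (fst R) (fst R)"
  shows "snd (dsum_list Rs) g \<in> carrier_mat (fst (dsum_list Rs)) (fst (dsum_list Rs))"
  using assms by (induction Rs) (auto simp: dsum_list_def zero_rep_def dsum_rep_def)

lemma mat_trace_dsum_list:
  assumes "\<forall>R\<in>set Rs. snd R g \<in> carrier_mat (fst R) (fst R)"
  shows "mat_trace (snd (dsum_list Rs) g) = (\<Sum>R\<leftarrow>Rs. mat_trace (snd R g))"
  using assms
proof (induction Rs)
  case Nil
  show ?case by (simp add: dsum_list_def zero_rep_def mat_trace_def)
next
  case (Cons R Rs)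
  then show ?case
    using dsum_list_carrier[of Rs g]
    by (simp add: dsum_list_def dsum_rep_def mat_trace_four_block_mat)
qed

lemma iso_rep_mat_trace_eq:
  assumes "iso_rep n k R S" "g \<in> Snk n k"
    and "snd R g \<in> carrier_mat (fst R) (fst R)" "snd S g \<in> carrier_mat (fst S) (fst S)"
  shows "mat_trace (snd R g) = mat_trace (snd S g)"
proof -
  obtain P where "P \<in> carrier_mat (fst R) (fst R)" "invertible_mat P" "P * snd R g = snd S g * P"
    using assms(1,2) unfolding iso_rep_def by blast
  then show ?thesis
    using mat_trace_similar assms(1,3,4) unfolding iso_rep_def by metis
qed

lemma sum_list_map_eq_sum_of_nat_count:
  fixes f :: "'a \<Rightarrow> 'b::comm_semiring_1"
  assumes "set xs \<subseteq> X" "finite X"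
  shows "(\<Sum>x\<leftarrow>xs. f x) = (\<Sum>x\<in>X. of_nat (count_list xs x) * f x)"
  using assms(1)
proof (induction xs)
  case (Cons a xs)
  have "(\<Sum>x\<in>X. of_nat (count_list (a # xs) x) * f x)
      = (\<Sum>x\<in>X. of_nat (count_list xs x) * f x) + (\<Sum>x\<in>X. if a = x then f x else 0)"
    unfolding sum.distrib[symmetric] by (intro sum.cong refl) (simp add: algebra_simps)
  also have "(\<Sum>x\<in>X. if a = x then f x else 0) = f a"
    using Cons.prems assms(2) by simp
  finally show ?case
    using Cons by (simp add: add.commute)
qed simp

lemma mat_trace_tensor_decomposition:
  assumes reps: "\<forall>T\<in>M. is_rep n k (L T)" and "finite M"
    and xs: "set xs \<subseteq> M" "\<forall>T\<in>M. count_list xs T = c T"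
      "iso_rep n k (tensor_rep (L R) (L S)) (dsum_list (map L xs))"
    and "R \<in> M" "S \<in> M" and g: "g \<in> Snk n k"
  shows "mat_trace (snd (L R) g) * mat_trace (snd (L S) g) =
         (\<Sum>T\<in>M. of_nat (c T) * mat_trace (snd (L T) g))"
proof -
  have car: "snd (L T) g \<in> carrier_mat (fst (L T)) (fst (L T))" if "T \<in> M" for T
    using reps that g unfolding is_rep_def by (auto split: prod.splits)
  then have summands: "\<forall>V\<in>set (map L xs). snd V g \<in> carrier_mat (fst V) (fst V)"
    using xs(1) by auto
  have "mat_trace (snd (L R) g) * mat_trace (snd (L S) g) = mat_trace (snd (tensor_rep (L R) (L S)) g)"
    using car[OF \<open>R \<in> M\<close>] car[OF \<open>S \<in> M\<close>] by (simp add: tensor_rep_def mat_trace_kron)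
  also have "\<dots> = mat_trace (snd (dsum_list (map L xs)) g)"
    using car[OF \<open>R \<in> M\<close>] car[OF \<open>S \<in> M\<close>] dsum_list_carrier[OF summands]
    by (intro iso_rep_mat_trace_eq[OF xs(3) g]) (auto simp: tensor_rep_def kron_def)
  also have "\<dots> = (\<Sum>T\<leftarrow>xs. mat_trace (snd (L T) g))"
    using mat_trace_dsum_list[OF summands] by (simp add: o_def)
  also have "\<dots> = (\<Sum>T\<in>M. of_nat (c T) * mat_trace (snd (L T) g))"
    using sum_list_map_eq_sum_of_nat_count[OF xs(1) \<open>finite M\<close>] xs(2) by simp
  finally show ?thesis .
qed

lemma mat_trace_ypow_zero_neq_0:
  assumes "irreducible_rep n k V"
  shows "mat_trace (snd V (ypow (\<lambda>_. 0))) \<noteq> 0"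
proof -
  obtain d r where V: "V = (d, r)" by (cases V)
  have "r gone = 1\<^sub>m d" "0 < d"
    using assms V by (auto simp: irreducible_rep_def is_rep_def)
  moreover have "ypow (\<lambda>_. 0) = gone" by (simp add: ypow_def gone_def)
  ultimately show ?thesis
    using V by (simp add: mat_trace_def)
qed

section \<open>Character sums over \<open>Z_n^k\<close>\<close>

definition residue_vectors :: "nat set \<Rightarrow> nat \<Rightarrow> (nat \<Rightarrow> nat) set" where
  "residue_vectors I n = {\<alpha>. (\<forall>i\<in>I. \<alpha> i < n) \<and> (\<forall>i. i \<notin> I \<longrightarrow> \<alpha> i = 0)}"

lemma residue_vectors_empty: "residue_vectors {} n = {\<lambda>_. 0}"
  by (auto simp: residue_vectors_def)

lemma residue_vectors_insert:
  assumes "x \<notin> I"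
  shows "residue_vectors (insert x I) n = (\<lambda>(\<alpha>, a). \<alpha>(x := a)) ` (residue_vectors I n \<times> {..<n})"
proof
  show "residue_vectors (insert x I) n \<subseteq> (\<lambda>(\<alpha>, a). \<alpha>(x := a)) ` (residue_vectors I n \<times> {..<n})"
  proof
    fix \<beta> assume \<beta>: "\<beta> \<in> residue_vectors (insert x I) n"
    then have "(\<beta>(x := 0), \<beta> x) \<in> residue_vectors I n \<times> {..<n}"
      using assms by (auto simp: residue_vectors_def)
    then show "\<beta> \<in> (\<lambda>(\<alpha>, a). \<alpha>(x := a)) ` (residue_vectors I n \<times> {..<n})"
      by (rule rev_image_eqI) simp
  qed
qed (auto simp: residue_vectors_def)

lemma sum_residue_vectors_prod:
  fixes g :: "nat \<Rightarrow> nat \<Rightarrow> 'a::comm_semiring_1"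
  assumes "finite I"
  shows "(\<Sum>\<alpha>\<in>residue_vectors I n. \<Prod>i\<in>I. g i (\<alpha> i)) = (\<Prod>i\<in>I. \<Sum>a<n. g i a)"
  using assms
proof (induction I rule: finite_induct)
  case empty
  show ?case by (simp add: residue_vectors_empty)
next
  case (insert x I)
  have inj: "inj_on (\<lambda>(\<alpha>, a). \<alpha>(x := a)) (residue_vectors I n \<times> {..<n})"
  proof (rule inj_onI, clarify)
    fix \<alpha> a \<beta> b assume "\<alpha> \<in> residue_vectors I n" "\<beta> \<in> residue_vectors I n" and e: "\<alpha>(x := a) = \<beta>(x := b)"
    then have "\<alpha> x = 0" "\<beta> x = 0"
      using insert.hyps by (auto simp: residue_vectors_def)
    moreover have "a = b"
      using fun_cong[OF e, of x] by simp
    ultimately show "\<alpha> = \<beta> \<and> a = b"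
      using e by (metis fun_upd_triv fun_upd_upd)
  qed
  have "(\<Sum>\<beta>\<in>residue_vectors (insert x I) n. \<Prod>i\<in>insert x I. g i (\<beta> i))
      = (\<Sum>(\<alpha>, a)\<in>residue_vectors I n \<times> {..<n}. \<Prod>i\<in>insert x I. g i ((\<alpha>(x := a)) i))"
    unfolding residue_vectors_insert[OF insert.hyps(2)] sum.reindex[OF inj]
    by (simp add: case_prod_unfold)
  also have "\<dots> = (\<Sum>(\<alpha>, a)\<in>residue_vectors I n \<times> {..<n}. g x a * (\<Prod>i\<in>I. g i (\<alpha> i)))"
  proof (intro sum.cong refl, clarify)
    fix \<alpha> a
    have "(\<Prod>i\<in>I. g i ((\<alpha>(x := a)) i)) = (\<Prod>i\<in>I. g i (\<alpha> i))"
      using insert.hyps by (intro prod.cong) auto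
    then show "(\<Prod>i\<in>insert x I. g i ((\<alpha>(x := a)) i)) = g x a * (\<Prod>i\<in>I. g i (\<alpha> i))"
      using insert.hyps by simp
  qed
  also have "\<dots> = (\<Sum>a<n. g x a) * (\<Sum>\<alpha>\<in>residue_vectors I n. \<Prod>i\<in>I. g i (\<alpha> i))"
    by (simp add: sum.cartesian_product[symmetric] sum_product sum.swap[of _ "residue_vectors I n"])
  finally show ?case
    using insert by simp
qed

lemma sum_primitive_root_powers:
  fixes \<zeta> :: complex
  assumes n: "1 \<le> n" and root: "\<zeta> ^ n = 1" and prim: "\<forall>j. 0 < j \<and> j < n \<longrightarrow> \<zeta> ^ j \<noteq> 1"
  shows "(\<Sum>a<n. \<zeta> ^ (a * d)) = (if n dvd d then of_nat n else 0)"
proof -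
  have root_pow: "(\<zeta> ^ e) ^ n = 1" for e
    using root by (simp only: power_mult[symmetric] mult.commute[of e] power_mult) simp
  have "\<zeta> ^ d = (\<zeta> ^ n) ^ (d div n) * \<zeta> ^ (d mod n)"
    by (simp only: power_mult[symmetric] power_add[symmetric] mult_div_mod_eq)
  then have "\<zeta> ^ d = \<zeta> ^ (d mod n)"
    using root by simp
  moreover have "d mod n < n"
    using n by simp
  ultimately have "\<zeta> ^ d = 1 \<longleftrightarrow> n dvd d"
    using prim by (metis dvd_eq_mod_eq_0 neq0_conv power_0)
  moreover have "(\<Sum>a<n. \<zeta> ^ (a * d)) = (\<Sum>a<n. (\<zeta> ^ d) ^ a)"
    by (simp only: mult.commute[of _ d] power_mult)
  moreover have "(\<Sum>a<n. (\<zeta> ^ d) ^ a) = 0" if "\<zeta> ^ d \<noteq> 1"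
    using geometric_sum[OF that, of n] root_pow by simp
  ultimately show ?thesis
    by auto
qed

lemma sum_residue_vectors_primitive_root:
  fixes \<zeta> :: complex
  assumes "1 \<le> n" "\<zeta> ^ n = 1" "\<forall>j. 0 < j \<and> j < n \<longrightarrow> \<zeta> ^ j \<noteq> 1"
  shows "(\<Sum>\<alpha>\<in>residue_vectors {1..k} n. \<Prod>i\<in>{1..k}. \<zeta> ^ (\<alpha> i * d i)) =
         (if \<forall>i\<in>{1..k}. n dvd d i then of_nat n ^ k else 0)"
proof -
  have "(\<Sum>\<alpha>\<in>residue_vectors {1..k} n. \<Prod>i\<in>{1..k}. \<zeta> ^ (\<alpha> i * d i))
      = (\<Prod>i\<in>{1..k}. if n dvd d i then of_nat n else 0)"
    using sum_residue_vectors_prod[of "{1..k}" "\<lambda>i a. \<zeta> ^ (a * d i)" n]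
      sum_primitive_root_powers[OF assms] by simp
  then show ?thesis
    by (auto simp: prod_zero_iff)
qed

section \<open>The vectors \<open>A_{k,n}\<close> and shapes of multipartitions\<close>

lemma AknD:
  assumes "lam \<in> Akn k n"
  shows "\<And>i. i \<in> {1..k} \<Longrightarrow> 0 < lam i \<and> lam i \<le> n"
    and "\<And>i j. 1 \<le> i \<Longrightarrow> i \<le> j \<Longrightarrow> j \<le> k \<Longrightarrow> lam j \<le> lam i"
    and "\<And>i. i \<notin> {1..k} \<Longrightarrow> lam i = 0"
  using assms unfolding Akn_def by auto

lemma downward_closed_eq_atLeastAtMost_card:
  assumes "S \<subseteq> {1..(m::nat)}" and "\<And>p q. p \<in> S \<Longrightarrow> 1 \<le> q \<Longrightarrow> q \<le> p \<Longrightarrow> q \<in> S"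
  shows "S = {1..card S}"
proof (cases "S = {}")
  case False
  have "finite S"
    using assms(1) finite_subset by blast
  then have "Max S \<in> S" "\<forall>p\<in>S. p \<le> Max S"
    using False by simp_all
  then have "S = {1..Max S}"
    using assms by auto
  then show ?thesis
    by (metis card_atLeastAtMost diff_Suc_1)
qed simp

lemma antimono_ge_iff_le_card:
  fixes f :: "nat \<Rightarrow> nat"
  assumes "\<And>i j. 1 \<le> i \<Longrightarrow> i \<le> j \<Longrightarrow> j \<le> m \<Longrightarrow> f j \<le> f i" and "x \<in> {1..m}"
  shows "t \<le> f x \<longleftrightarrow> x \<le> card {y\<in>{1..m}. t \<le> f y}"
proof -
  let ?S = "{y\<in>{1..m}. t \<le> f y}"
  have "?S = {1..card ?S}"
    by (rule downward_closed_eq_atLeastAtMost_card[where m = m]) (use assms(1) in \<open>auto intro: order_trans\<close>)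
  then have "x \<in> ?S \<longleftrightarrow> x \<in> {1..card ?S}" by simp
  then show ?thesis
    using assms(2) by auto
qed

lemma card_Collect_permutes:
  assumes "w permutes A"
  shows "card {j\<in>A. P (w j)} = card {q\<in>A. P q}"
  by (rule bij_betw_same_card, rule bij_betw_Collect[OF permutes_imp_bij[OF assms]]) simp

lemma mult_of_comp_permutes:
  "w \<in> Sk k \<Longrightarrow> mult_of k (rho \<circ> w) i = mult_of k rho i"
  using card_Collect_permutes[of w "{1..k}" "\<lambda>q. rho q = i"] by (simp add: mult_of_def Sk_def)

lemma card_ge_eq_sum_mult_of:
  assumes "rho \<in> Akn k n" "1 \<le> v"
  shows "card {q\<in>{1..k}. v \<le> rho q} = (\<Sum>u\<in>{v..n}. mult_of k rho u)"
proof -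
  have "{q\<in>{1..k}. v \<le> rho q} = (\<Union>u\<in>{v..n}. {q\<in>{1..k}. rho q = u})"
    using AknD(1)[OF assms(1)] by auto
  also have "card \<dots> = (\<Sum>u\<in>{v..n}. card {q\<in>{1..k}. rho q = u})"
    by (rule card_UN_disjoint) auto
  finally show ?thesis
    by (simp add: mult_of_def)
qed

lemma Akn_eqI_mult_of:
  assumes rho: "rho \<in> Akn k n" and nu: "nu \<in> Akn k n"
    and mult: "\<forall>i\<in>{1..n}. mult_of k rho i = mult_of k nu i"
  shows "rho = nu"
proof
  fix p
  show "rho p = nu p"
  proof (cases "p \<in> {1..k}")
    case True
    have "card {q\<in>{1..k}. v \<le> rho q} = card {q\<in>{1..k}. v \<le> nu q}" for v
      using card_ge_eq_sum_mult_of[OF rho, of v] card_ge_eq_sum_mult_of[OF nu, of v] mult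
      by (cases "v = 0") auto
    then have "v \<le> rho p \<longleftrightarrow> v \<le> nu p" for v
      using antimono_ge_iff_le_card[where f = rho, OF AknD(2)[OF rho] True]
        antimono_ge_iff_le_card[where f = nu, OF AknD(2)[OF nu] True]
      by simp
    then show ?thesis
      by (meson le_antisym order_refl)
  qed (simp add: AknD(3)[OF rho] AknD(3)[OF nu])
qed

text \<open>When \<open>S v\<close> counts the entries \<open>\<ge> v\<close> of some \<open>rho \<in> A_{k,n}\<close>, this recovers \<open>rho\<close>.\<close>
definition conjugate_vector :: "nat \<Rightarrow> nat \<Rightarrow> (nat \<Rightarrow> nat) \<Rightarrow> nat \<Rightarrow> nat" where
  "conjugate_vector k n S p = (if p \<in> {1..k} then card {v\<in>{1..n}. p \<le> S v} else 0)"

lemma conjugate_vector_le: "conjugate_vector k n S p \<le> n"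
proof -
  have "card {v\<in>{1..n}. p \<le> S v} \<le> card {1..n}"
    by (rule card_mono) auto
  then show ?thesis
    by (simp add: conjugate_vector_def)
qed

lemma conjugate_vector_ge_iff:
  assumes anti: "\<And>u v. u \<le> v \<Longrightarrow> S v \<le> S u" and Sn: "S (Suc n) = 0"
    and p: "p \<in> {1..k}" and v: "v \<in> {1..Suc n}"
  shows "v \<le> conjugate_vector k n S p \<longleftrightarrow> p \<le> S v"
proof (cases "v = Suc n")
  case True
  then show ?thesis
    using conjugate_vector_le[of k n S p] Sn p by auto
next
  case False
  then show ?thesis
    using antimono_ge_iff_le_card[where f = S and m = n and x = v and t = p] anti p v
    by (auto simp: conjugate_vector_def)
qed

lemma conjugate_vector_Akn:
  assumes anti: "\<And>u v. u \<le> v \<Longrightarrow> S v \<le> S u" and S1: "S 1 = k" and Sn: "S (Suc n) = 0"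
  shows "conjugate_vector k n S \<in> Akn k n"
  unfolding Akn_def
proof (intro CollectI conjI allI ballI impI)
  fix i assume i: "i \<in> {1..k}"
  have "n \<noteq> 0"
  proof
    assume "n = 0"
    then have "k = 0"
      using S1 Sn by simp
    then show False
      using i by simp
  qed
  then show "0 < conjugate_vector k n S i"
    using conjugate_vector_ge_iff[where S = S, OF anti Sn i, of 1] S1 i by simp
next
  fix i
  show "conjugate_vector k n S i \<le> n"
    by (rule conjugate_vector_le)
next
  fix i j assume "1 \<le> i" "i \<le> j" "j \<le> k"
  moreover have "card {v\<in>{1..n}. j \<le> S v} \<le> card {v\<in>{1..n}. i \<le> S v}"
    by (rule card_mono) (use \<open>i \<le> j\<close> in auto)
  ultimately show "conjugate_vector k n S j \<le> conjugate_vector k n S i"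
    by (simp add: conjugate_vector_def)
qed (auto simp: conjugate_vector_def)

lemma mult_of_conjugate_vector:
  assumes anti: "\<And>u v. u \<le> v \<Longrightarrow> S v \<le> S u" and S1: "S 1 = k" and Sn: "S (Suc n) = 0"
    and v: "v \<in> {1..n}"
  shows "mult_of k (conjugate_vector k n S) v = S v - S (Suc v)"
proof -
  let ?rho = "conjugate_vector k n S"
  have "?rho p = v \<longleftrightarrow> v \<le> ?rho p \<and> \<not> Suc v \<le> ?rho p" for p
    by auto
  then have "{p\<in>{1..k}. ?rho p = v} = {p\<in>{1..k}. p \<le> S v \<and> \<not> p \<le> S (Suc v)}"
    using conjugate_vector_ge_iff[where S = S and n = n and k = k, OF anti Sn, of _ v]
      conjugate_vector_ge_iff[where S = S and n = n and k = k, OF anti Sn, of _ "Suc v"] v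
    by auto
  also have "\<dots> = {Suc (S (Suc v))..S v}"
    using anti[of 1 v] anti[of v "Suc v"] S1 v by auto
  finally show ?thesis
    by (simp add: mult_of_def)
qed

lemma ex_Akn_has_shape:
  assumes "T \<in> multipartitions n k"
  shows "\<exists>rho\<in>Akn k n. has_shape k n T rho"
proof -
  define S where "S v = (\<Sum>u\<in>{v..n}. sum_list (T u))" for v
  have S1: "S 1 = k"
    using assms by (simp add: S_def multipartitions_def)
  have anti: "S v \<le> S u" if "u \<le> v" for u v
    unfolding S_def by (rule sum_mono2) (use that in auto)
  have Sn: "S (Suc n) = 0"
    by (simp add: S_def)
  have "S v - S (Suc v) = sum_list (T v)" if "v \<in> {1..n}" for v
    using that by (simp add: S_def sum.atLeast_Suc_atMost)
  then have "has_shape k n T (conjugate_vector k n S)"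
    using mult_of_conjugate_vector[OF anti S1 Sn] by (simp add: has_shape_def)
  then show ?thesis
    using conjugate_vector_Akn[OF anti S1 Sn] by blast
qed

definition shape_of :: "nat \<Rightarrow> nat \<Rightarrow> (nat \<Rightarrow> nat list) \<Rightarrow> nat \<Rightarrow> nat" where
  "shape_of k n T = (SOME rho. rho \<in> Akn k n \<and> has_shape k n T rho)"

lemma shape_of:
  assumes "T \<in> multipartitions n k"
  shows "shape_of k n T \<in> Akn k n" and "has_shape k n T (shape_of k n T)"
  using someI_ex[OF ex_Akn_has_shape[OF assms, unfolded Bex_def]] by (simp_all add: shape_of_def)

lemma shape_of_eqI:
  assumes "T \<in> multipartitions n k" "rho \<in> Akn k n" "has_shape k n T rho"
  shows "shape_of k n T = rho"
  using Akn_eqI_mult_of[OF shape_of(1)[OF assms(1)] assms(2)] shape_of(2)[OF assms(1)] assms(3)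
  by (simp add: has_shape_def)

lemma length_le_sum_list: "\<forall>x\<in>set xs. 0 < (x::nat) \<Longrightarrow> length xs \<le> sum_list xs"
  by (induction xs) auto

lemma finite_multipartitions: "finite (multipartitions n k)"
proof -
  define Lk where "Lk = {xs :: nat list. set xs \<subseteq> {0..k} \<and> length xs \<le> k}"
  have "finite Lk"
    unfolding Lk_def by (rule finite_lists_length_le) simp
  have "P i \<in> Lk" if P: "P \<in> multipartitions n k" and i: "i \<in> {1..n}" for P i
  proof -
    have part: "is_partition (P i)"
      using P i by (simp add: multipartitions_def)
    have "sum_list (P i) \<le> (\<Sum>j=1..n. sum_list (P j))"
      by (rule member_le_sum) (use i in auto)
    then have s: "sum_list (P i) \<le> k"
      using P by (simp add: multipartitions_def)
    have "length (P i) \<le> sum_list (P i)"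
      using part length_le_sum_list by (simp add: is_partition_def)
    then show ?thesis
      using s member_le_sum_list[of _ "P i"] by (fastforce simp: Lk_def)
  qed
  then have "multipartitions n k \<subseteq> (\<lambda>f i. if i \<in> {1..n} then f i else []) ` PiE {1..n} (\<lambda>_. Lk)"
    by (auto simp: multipartitions_def intro!: image_eqI[where x = "restrict _ {1..n}"])
  moreover have "finite (PiE {1..n} (\<lambda>_. Lk))"
    using \<open>finite Lk\<close> by (simp add: finite_PiE)
  ultimately show ?thesis
    using finite_subset by blast
qed

section \<open>Rearrangements and minimal coset representatives\<close>

definition rearrangements :: "nat \<Rightarrow> (nat \<Rightarrow> nat) \<Rightarrow> (nat \<Rightarrow> nat) set" where
  "rearrangements k lam = {lam \<circ> w | w. w \<in> Sk k}"

lemma finite_rearrangements: "finite (rearrangements k lam)"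
proof -
  have "rearrangements k lam = (\<lambda>w. lam \<circ> w) ` Sk k"
    by (auto simp: rearrangements_def)
  moreover have "finite (Sk k)"
    unfolding Sk_def by (rule finite_permutations) simp
  ultimately show ?thesis by simp
qed

lemma self_in_rearrangements: "lam \<in> rearrangements k lam"
proof -
  have "id \<in> Sk k" "lam = lam \<circ> id"
    by (simp_all add: Sk_def permutes_id)
  then show ?thesis
    unfolding rearrangements_def by blast
qed

lemma rearrangements_Akn_eq:
  assumes rho: "rho \<in> Akn k n" and nu: "nu \<in> Akn k n" and "nu \<in> rearrangements k rho"
  shows "nu = rho"
proof -
  obtain w where "w \<in> Sk k" "nu = rho \<circ> w"
    using assms(3) by (auto simp: rearrangements_def)
  then show ?thesis
    using Akn_eqI_mult_of[OF nu rho] mult_of_comp_permutes by simp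
qed

lemma rearrangementsD:
  assumes rho: "rho \<in> Akn k n" and "\<beta> \<in> rearrangements k rho"
  shows "\<And>i. i \<in> {1..k} \<Longrightarrow> 0 < \<beta> i \<and> \<beta> i \<le> n" and "\<And>i. i \<notin> {1..k} \<Longrightarrow> \<beta> i = 0"
proof -
  obtain w where w: "w permutes {1..k}" "\<beta> = rho \<circ> w"
    using assms(2) by (auto simp: rearrangements_def Sk_def)
  show "\<And>i. i \<in> {1..k} \<Longrightarrow> 0 < \<beta> i \<and> \<beta> i \<le> n"
    using w AknD(1)[OF rho] permutes_in_image[OF w(1)] by simp
  show "\<And>i. i \<notin> {1..k} \<Longrightarrow> \<beta> i = 0"
    using w AknD(3)[OF rho] permutes_not_in[OF w(1)] by simp
qed

text \<open>For \<open>\<beta> = lam \<circ> v\<close> with \<open>lam\<close> nonincreasing, an inversion of \<open>v\<close> is either an ascent of \<open>\<beta>\<close>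
  or an inversion of \<open>v\<close> between two positions where \<open>\<beta>\<close> ties. The ascents depend only on the coset
  \<open>S_lam v\<close>, so the minimal representatives are the \<open>v\<close> without tied inversions, and such a \<open>v\<close>
  is forced to be the rank function of \<open>\<beta>\<close> with ties broken by position.\<close>

definition ascents :: "nat \<Rightarrow> (nat \<Rightarrow> nat) \<Rightarrow> (nat \<times> nat) set" where
  "ascents k \<beta> = {(i, j). 1 \<le> i \<and> i < j \<and> j \<le> k \<and> \<beta> i < \<beta> j}"

definition tied_inversions :: "nat \<Rightarrow> (nat \<Rightarrow> nat) \<Rightarrow> (nat \<Rightarrow> nat) \<Rightarrow> (nat \<times> nat) set" where
  "tied_inversions k \<beta> v = {(i, j). 1 \<le> i \<and> i < j \<and> j \<le> k \<and> \<beta> i = \<beta> j \<and> v j < v i}"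

lemma tied_inversionsI:
  "1 \<le> i \<Longrightarrow> i < j \<Longrightarrow> j \<le> k \<Longrightarrow> \<beta> i = \<beta> j \<Longrightarrow> v j < v i \<Longrightarrow> (i, j) \<in> tied_inversions k \<beta> v"
  by (simp add: tied_inversions_def)

definition rank_in :: "nat \<Rightarrow> (nat \<Rightarrow> nat) \<Rightarrow> nat \<Rightarrow> nat" where
  "rank_in k \<beta> i = card {j\<in>{1..k}. \<beta> i < \<beta> j \<or> (\<beta> j = \<beta> i \<and> j \<le> i)}"

lemma Akn_comp_permutes_less_iff:
  assumes lam: "lam \<in> Akn k n" and v: "v permutes {1..k}" and "i \<in> {1..k}" "j \<in> {1..k}"
    and ne: "lam (v i) \<noteq> lam (v j)"
  shows "v j < v i \<longleftrightarrow> lam (v i) < lam (v j)"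
proof -
  have "v i \<in> {1..k}" "v j \<in> {1..k}"
    using assms(3,4) permutes_in_image[OF v] by auto
  then have "v j \<le> v i \<Longrightarrow> lam (v i) \<le> lam (v j)" "v i \<le> v j \<Longrightarrow> lam (v j) \<le> lam (v i)"
    using AknD(2)[OF lam] by auto
  then show ?thesis
    using ne by (metis le_less linorder_not_le)
qed

lemma perm_length_split:
  assumes lam: "lam \<in> Akn k n" and v: "v permutes {1..k}"
  shows "perm_length k v = card (ascents k (lam \<circ> v)) + card (tied_inversions k (lam \<circ> v) v)"
proof -
  have "1 \<le> i \<and> i < j \<and> j \<le> k \<and> v j < v i \<longleftrightarrow>
      (i, j) \<in> ascents k (lam \<circ> v) \<union> tied_inversions k (lam \<circ> v) v" for i j
  proof (cases "1 \<le> i \<and> i < j \<and> j \<le> k \<and> lam (v i) \<noteq> lam (v j)")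
    case True
    then have "i \<in> {1..k}" "j \<in> {1..k}" by auto
    then show ?thesis
      using Akn_comp_permutes_less_iff[OF lam v] True by (auto simp: ascents_def tied_inversions_def)
  qed (auto simp: ascents_def tied_inversions_def)
  then have "{(i, j). 1 \<le> i \<and> i < j \<and> j \<le> k \<and> v j < v i} = ascents k (lam \<circ> v) \<union> tied_inversions k (lam \<circ> v) v"
    by auto
  moreover have "finite (ascents k (lam \<circ> v))" "finite (tied_inversions k (lam \<circ> v) v)"
    by (rule finite_subset[of _ "{1..k} \<times> {1..k}"], auto simp: ascents_def tied_inversions_def)+
  moreover have "ascents k (lam \<circ> v) \<inter> tied_inversions k (lam \<circ> v) v = {}"
    by (auto simp: ascents_def tied_inversions_def)
  ultimately show ?thesis
    by (simp add: perm_length_def card_Un_disjoint)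
qed

lemma finite_tied_inversions: "finite (tied_inversions k \<beta> v)"
  by (rule finite_subset[of _ "{1..k} \<times> {1..k}"]) (auto simp: tied_inversions_def)

lemma le_iff_le_if_no_tied_inversions:
  assumes v: "v permutes {1..k}" and none: "tied_inversions k \<beta> v = {}"
    and i: "i \<in> {1..k}" and j: "j \<in> {1..k}" and eq: "\<beta> i = \<beta> j"
  shows "v j \<le> v i \<longleftrightarrow> j \<le> i"
proof -
  have untied: "\<not> v b < v a" if "a \<in> {1..k}" "b \<in> {1..k}" "a < b" "\<beta> a = \<beta> b" for a b
  proof
    assume "v b < v a"
    with that have "(a, b) \<in> tied_inversions k \<beta> v"
      by (intro tied_inversionsI) auto
    with none show False
      by simp
  qed
  have "\<not> v j < v i" if "i < j"
    using untied[OF i j that eq] .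
  moreover have "\<not> v i < v j" if "j < i"
    using untied[OF j i that eq[symmetric]] .
  moreover have "v j \<noteq> v i" if "j \<noteq> i"
    using that permutes_inj[OF v] by (simp add: inj_eq)
  ultimately show ?thesis
    by (cases j i rule: linorder_cases) auto
qed

lemma eq_rank_in_if_no_tied_inversions:
  assumes lam: "lam \<in> Akn k n" and v: "v permutes {1..k}"
    and none: "tied_inversions k (lam \<circ> v) v = {}" and i: "i \<in> {1..k}"
  shows "v i = rank_in k (lam \<circ> v) i"
proof -
  have set_eq: "{j\<in>{1..k}. v j \<le> v i} = {j\<in>{1..k}. lam (v i) < lam (v j) \<or> (lam (v j) = lam (v i) \<and> j \<le> i)}"
  proof (rule Collect_cong, rule conj_cong[OF refl])
    fix j assume j: "j \<in> {1..k}"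
    show "v j \<le> v i \<longleftrightarrow> lam (v i) < lam (v j) \<or> (lam (v j) = lam (v i) \<and> j \<le> i)"
    proof (cases "lam (v i) = lam (v j)")
      case True
      then show ?thesis
        using le_iff_le_if_no_tied_inversions[OF v none i j] by simp
    next
      case False
      then have "v j \<noteq> v i"
        by auto
      then show ?thesis
        using Akn_comp_permutes_less_iff[OF lam v i j False] False by auto
    qed
  qed
  have "v i \<in> {1..k}"
    using permutes_in_image[OF v] i by simp
  then have "{p\<in>{1..k}. p \<le> v i} = {1..v i}"
    by auto
  then have "v i = card {p\<in>{1..k}. p \<le> v i}"
    by simp
  also have "\<dots> = card {j\<in>{1..k}. v j \<le> v i}"
    using card_Collect_permutes[OF v, of "\<lambda>p. p \<le> v i"] by simp
  also have "\<dots> = card {j\<in>{1..k}. lam (v i) < lam (v j) \<or> (lam (v j) = lam (v i) \<and> j \<le> i)}"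
    by (simp only: set_eq)
  finally show ?thesis
    unfolding rank_in_def comp_def .
qed

lemma rank_in_less:
  assumes "i \<in> {1..k}" "j \<in> {1..k}" and "\<beta> j < \<beta> i \<or> (\<beta> i = \<beta> j \<and> i < j)"
  shows "rank_in k \<beta> i < rank_in k \<beta> j"
proof -
  let ?S = "\<lambda>i. {j'\<in>{1..k}. \<beta> i < \<beta> j' \<or> (\<beta> j' = \<beta> i \<and> j' \<le> i)}"
  have "\<beta> j < \<beta> x \<or> (\<beta> x = \<beta> j \<and> x \<le> j)" if "\<beta> i < \<beta> x \<or> (\<beta> x = \<beta> i \<and> x \<le> i)" for x
    using that assms(3) by linarith
  then have sub: "?S i \<subseteq> ?S j"
    by blast
  have "\<not> (\<beta> i < \<beta> j \<or> (\<beta> j = \<beta> i \<and> j \<le> i))"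
    using assms(3) by linarith
  then have "j \<in> ?S j - ?S i"
    using assms(2) by simp
  then have "card (?S i) < card (?S j)"
    using sub by (intro psubset_card_mono) auto
  then show ?thesis
    unfolding rank_in_def .
qed

lemma rank_in_range:
  assumes "i \<in> {1..k}"
  shows "rank_in k \<beta> i \<in> {1..k}"
proof -
  let ?S = "{j\<in>{1..k}. \<beta> i < \<beta> j \<or> (\<beta> j = \<beta> i \<and> j \<le> i)}"
  have "0 < card ?S"
    using assms by (auto simp: card_gt_0_iff)
  moreover have "card ?S \<le> card {1..k}"
    by (rule card_mono) auto
  ultimately show ?thesis
    by (simp add: rank_in_def)
qed

lemma rank_in_permutes:
  "(\<lambda>i. if i \<in> {1..k} then rank_in k \<beta> i else i) permutes {1..k}" (is "?v permutes _")
proof -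
  have inj: "inj_on ?v {1..k}"
  proof (rule inj_onI, rule ccontr)
    fix i j assume ij: "i \<in> {1..k}" "j \<in> {1..k}" "?v i = ?v j" "i \<noteq> j"
    then have "(\<beta> j < \<beta> i \<or> (\<beta> i = \<beta> j \<and> i < j)) \<or> (\<beta> i < \<beta> j \<or> (\<beta> j = \<beta> i \<and> j < i))"
      by linarith
    then show False
      using rank_in_less[OF ij(1,2), of \<beta>] rank_in_less[OF ij(2,1), of \<beta>] ij by auto
  qed
  moreover have "?v ` {1..k} \<subseteq> {1..k}"
    using rank_in_range by auto
  ultimately have "?v ` {1..k} = {1..k}"
    by (intro endo_inj_surj) simp_all
  then have "bij_betw ?v {1..k} {1..k}"
    using inj by (simp add: bij_betw_def)
  moreover have "?v x = x" if "x \<notin> {1..k}" for x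
    using that by auto
  ultimately show ?thesis
    by (rule bij_imp_permutes)
qed

lemma Akn_rank_in:
  assumes lam: "lam \<in> Akn k n" and \<beta>: "\<beta> \<in> rearrangements k lam" and i: "i \<in> {1..k}"
  shows "lam (rank_in k \<beta> i) = \<beta> i"
proof -
  obtain w where w: "w permutes {1..k}" and \<beta>w: "\<beta> = lam \<circ> w"
    using \<beta> by (auto simp: rearrangements_def Sk_def)
  have tail_counts: "card {j\<in>{1..k}. t \<le> \<beta> j} = card {q\<in>{1..k}. t \<le> lam q}" for t
    using card_Collect_permutes[OF w, of "\<lambda>x. t \<le> lam x"] \<beta>w by simp
  let ?r = "rank_in k \<beta> i"
  have r: "?r \<in> {1..k}"
    using rank_in_range[OF i] .
  have "?r \<le> card {j\<in>{1..k}. \<beta> i \<le> \<beta> j}"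
    unfolding rank_in_def by (rule card_mono) auto
  then have "\<beta> i \<le> lam ?r"
    using antimono_ge_iff_le_card[where f = lam, OF AknD(2)[OF lam] r] tail_counts by simp
  moreover have "card {j\<in>{1..k}. Suc (\<beta> i) \<le> \<beta> j} < ?r"
    unfolding rank_in_def by (rule psubset_card_mono) (use i in auto)
  then have "\<not> Suc (\<beta> i) \<le> lam ?r"
    using antimono_ge_iff_le_card[where f = lam, OF AknD(2)[OF lam] r] tail_counts by simp
  ultimately show ?thesis
    by simp
qed

lemma ex_permutes_no_tied_inversions:
  assumes lam: "lam \<in> Akn k n" and \<beta>: "\<beta> \<in> rearrangements k lam"
  shows "\<exists>v. v permutes {1..k} \<and> lam \<circ> v = \<beta> \<and> tied_inversions k \<beta> v = {}"
proof (intro exI conjI)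
  let ?v = "\<lambda>i. if i \<in> {1..k} then rank_in k \<beta> i else i"
  show "?v permutes {1..k}"
    by (rule rank_in_permutes)
  show "lam \<circ> ?v = \<beta>"
  proof
    fix i
    show "(lam \<circ> ?v) i = \<beta> i"
      using Akn_rank_in[OF lam \<beta>, of i] AknD(3)[OF lam, of i] rearrangementsD(2)[OF lam \<beta>, of i]
      by (cases "i \<in> {1..k}") simp_all
  qed
  have False if "(i, j) \<in> tied_inversions k \<beta> ?v" for i j
  proof -
    have "i \<in> {1..k}" "j \<in> {1..k}" "\<beta> i = \<beta> j" "i < j" "?v j < ?v i"
      using that by (auto simp: tied_inversions_def)
    then show False
      using rank_in_less[of i k j \<beta>] by auto
  qed
  then show "tied_inversions k \<beta> ?v = {}"
    by auto
qed

lemma min_reps_no_tied_inversions: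
  assumes lam: "lam \<in> Akn k n" and wm: "w \<in> min_reps k lam"
  shows "tied_inversions k (lam \<circ> w) w = {}"
proof -
  have w: "w permutes {1..k}"
    using wm by (simp add: min_reps_def Sk_def)
  have "lam \<circ> w \<in> rearrangements k lam"
    using w by (auto simp: rearrangements_def Sk_def)
  then obtain v where v: "v permutes {1..k}" "lam \<circ> v = lam \<circ> w" "tied_inversions k (lam \<circ> w) v = {}"
    using ex_permutes_no_tied_inversions[OF lam] by blast
  let ?u = "v \<circ> Hilbert_Choice.inv w"
  have "?u permutes {1..k}"
    by (rule permutes_compose[OF permutes_inv[OF w] v(1)])
  moreover have "lam \<circ> ?u = lam"
  proof -
    have "lam \<circ> ?u = lam \<circ> w \<circ> Hilbert_Choice.inv w"
      using v(2) by (simp add: o_assoc)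
    then show ?thesis
      using permutes_inv_o(1)[OF w] by (simp add: o_assoc[symmetric])
  qed
  ultimately have "?u \<in> stab k lam"
    by (simp add: stab_def Sk_def)
  then have "perm_length k w \<le> perm_length k (?u \<circ> w)"
    using wm unfolding min_reps_def by blast
  also have "?u \<circ> w = v"
    using permutes_inv_o(2)[OF w] by (simp add: o_assoc[symmetric])
  finally have "card (tied_inversions k (lam \<circ> w) w) \<le> 0"
    using perm_length_split[OF lam w] perm_length_split[OF lam v(1)] v(2,3) by simp
  then show ?thesis
    using finite_tied_inversions by simp
qed

lemma min_reps_inj:
  assumes lam: "lam \<in> Akn k n" and wm: "w \<in> min_reps k lam" and wm': "w' \<in> min_reps k lam"
    and e: "lam \<circ> w = lam \<circ> w'"
  shows "w = w'"
proof
  have w: "w permutes {1..k}" and w': "w' permutes {1..k}"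
    using wm wm' by (simp_all add: min_reps_def Sk_def)
  fix i
  show "w i = w' i"
  proof (cases "i \<in> {1..k}")
    case True
    have "w i = rank_in k (lam \<circ> w) i"
      using eq_rank_in_if_no_tied_inversions[OF lam w min_reps_no_tied_inversions[OF lam wm] True] .
    also have "\<dots> = rank_in k (lam \<circ> w') i"
      by (simp only: e)
    also have "\<dots> = w' i"
      using eq_rank_in_if_no_tied_inversions[OF lam w' min_reps_no_tied_inversions[OF lam wm'] True] ..
    finally show ?thesis .
  qed (simp add: permutes_not_in[OF w] permutes_not_in[OF w'])
qed

lemma min_repsI_no_tied_inversions:
  assumes lam: "lam \<in> Akn k n" and v: "v permutes {1..k}" and none: "tied_inversions k (lam \<circ> v) v = {}"
  shows "v \<in> min_reps k lam"
proof -
  have "perm_length k v \<le> perm_length k (u \<circ> v)" if "u \<in> stab k lam" for u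
  proof -
    have "u permutes {1..k}" "lam \<circ> u = lam"
      using that by (auto simp: stab_def Sk_def)
    then have "u \<circ> v permutes {1..k}" "lam \<circ> (u \<circ> v) = lam \<circ> v"
      using permutes_compose[OF v] by (auto simp: o_assoc)
    then show ?thesis
      using perm_length_split[OF lam v] perm_length_split[OF lam] none by simp
  qed
  then show ?thesis
    using v by (simp add: min_reps_def Sk_def)
qed

lemma bij_betw_min_reps_rearrangements:
  assumes lam: "lam \<in> Akn k n"
  shows "bij_betw (\<lambda>w. lam \<circ> w) (min_reps k lam) (rearrangements k lam)"
proof (rule bij_betwI')
  show "lam \<circ> w = lam \<circ> w' \<longleftrightarrow> w = w'" if "w \<in> min_reps k lam" "w' \<in> min_reps k lam" for w w'
    using min_reps_inj[OF lam that] by blast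
  show "lam \<circ> w \<in> rearrangements k lam" if "w \<in> min_reps k lam" for w
    using that by (auto simp: min_reps_def rearrangements_def)
  fix \<beta> assume "\<beta> \<in> rearrangements k lam"
  then obtain v where "v permutes {1..k}" "lam \<circ> v = \<beta>" "tied_inversions k \<beta> v = {}"
    using ex_permutes_no_tied_inversions[OF lam] by blast
  then show "\<exists>w\<in>min_reps k lam. \<beta> = lam \<circ> w"
    using min_repsI_no_tied_inversions[OF lam] by blast
qed

section \<open>The numbers \<open>N\<close> as character sums\<close>

lemma vsize_comp_permutes:
  "w permutes {1..k} \<Longrightarrow> (\<Sum>i=1..k. (lam \<circ> w) i) = vsize k lam"
  using sum.permute[of w "{1..k}" lam] by (simp add: vsize_def)

lemma Ncoef_condition_iff_dvd:
  assumes nu: "nu \<in> Akn k n"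
    and \<beta>: "\<beta> \<in> rearrangements k lam" and \<gamma>: "\<gamma> \<in> rearrangements k mu"
  shows "(\<exists>\<alpha> :: nat \<Rightarrow> int.
            (\<forall>i\<in>{1..k}. int (\<beta> i) + int (\<gamma> i) = int (nu i) + int n * \<alpha> i) \<and>
            int n * (\<Sum>i=1..k. \<alpha> i) = int (vsize k lam) + int (vsize k mu) - int (vsize k nu))
       \<longleftrightarrow> (\<forall>i\<in>{1..k}. n dvd \<beta> i + \<gamma> i + (n - nu i))" (is "?L \<longleftrightarrow> ?R")
proof
  assume ?L
  then obtain \<alpha> :: "nat \<Rightarrow> int" where \<alpha>: "\<forall>i\<in>{1..k}. int (\<beta> i) + int (\<gamma> i) = int (nu i) + int n * \<alpha> i"
    by blast
  show ?R
  proof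
    fix i assume i: "i \<in> {1..k}"
    then have "int (\<beta> i + \<gamma> i + (n - nu i)) = int n * (\<alpha> i + 1)"
      using \<alpha> AknD(1)[OF nu i] by (simp add: algebra_simps of_nat_diff)
    then show "n dvd \<beta> i + \<gamma> i + (n - nu i)"
      by (metis dvd_triv_left int_dvd_int_iff)
  qed
next
  assume R: ?R
  define \<alpha> where "\<alpha> i = (int (\<beta> i) + int (\<gamma> i) - int (nu i)) div int n" for i
  have \<alpha>: "int (\<beta> i) + int (\<gamma> i) = int (nu i) + int n * \<alpha> i" if i: "i \<in> {1..k}" for i
  proof -
    have "int n dvd int (\<beta> i + \<gamma> i + (n - nu i))"
      using R i by (simp only: int_dvd_int_iff)
    then have "int n dvd (int (\<beta> i) + int (\<gamma> i) - int (nu i)) + int n"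
      using AknD(1)[OF nu i] by (simp add: of_nat_diff algebra_simps)
    then show ?thesis
      unfolding \<alpha>_def by (simp add: dvd_add_left_iff)
  qed
  obtain w w' where "w permutes {1..k}" "\<beta> = lam \<circ> w" "w' permutes {1..k}" "\<gamma> = mu \<circ> w'"
    using \<beta> \<gamma> by (auto simp: rearrangements_def Sk_def)
  then have sums: "(\<Sum>i=1..k. \<beta> i) = vsize k lam" "(\<Sum>i=1..k. \<gamma> i) = vsize k mu"
    using vsize_comp_permutes by blast+
  have "int n * (\<Sum>i=1..k. \<alpha> i) = (\<Sum>i=1..k. int (\<beta> i) + int (\<gamma> i) - int (nu i))"
    using \<alpha> by (simp add: sum_distrib_left)
  also have "\<dots> = int (vsize k lam) + int (vsize k mu) - int (vsize k nu)"
    using sums by (simp add: sum.distrib sum_subtractf vsize_def flip: of_nat_sum)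
  finally show ?L
    using \<alpha> by blast
qed

lemma Ncoef_eq_card_rearrangements:
  assumes lam: "lam \<in> Akn k n" and mu: "mu \<in> Akn k n" and nu: "nu \<in> Akn k n"
  shows "Ncoef k n nu lam mu =
    card {(\<beta>, \<gamma>) \<in> rearrangements k lam \<times> rearrangements k mu. \<forall>i\<in>{1..k}. n dvd \<beta> i + \<gamma> i + (n - nu i)}"
proof -
  let ?f = "map_prod ((\<circ>) lam) ((\<circ>) mu)"
  let ?D = "\<lambda>(\<beta>, \<gamma>). \<forall>i\<in>{1..k}. n dvd \<beta> i + \<gamma> i + (n - nu i)"
  have "bij_betw ?f (min_reps k lam \<times> min_reps k mu) (rearrangements k lam \<times> rearrangements k mu)"
    using bij_betw_min_reps_rearrangements[OF lam] bij_betw_min_reps_rearrangements[OF mu]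
    by (rule bij_betw_map_prod)
  then have "card {p \<in> min_reps k lam \<times> min_reps k mu. ?D (?f p)}
      = card {q \<in> rearrangements k lam \<times> rearrangements k mu. ?D q}"
    by (intro bij_betw_same_card bij_betw_Collect) simp_all
  moreover have "Ncoef k n nu lam mu = card {p \<in> min_reps k lam \<times> min_reps k mu. ?D (?f p)}"
  proof -
    have cond: "(\<exists>\<alpha> :: nat \<Rightarrow> int.
            (\<forall>i\<in>{1..k}. int (lam (w i)) + int (mu (w' i)) = int (nu i) + int n * \<alpha> i) \<and>
            int n * (\<Sum>i=1..k. \<alpha> i) = int (vsize k lam) + int (vsize k mu) - int (vsize k nu))
        \<longleftrightarrow> (\<forall>i\<in>{1..k}. n dvd lam (w i) + mu (w' i) + (n - nu i))"
      if "w \<in> min_reps k lam" "w' \<in> min_reps k mu" for w w'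
    proof -
      have "lam \<circ> w \<in> rearrangements k lam" "mu \<circ> w' \<in> rearrangements k mu"
        using that by (auto simp: min_reps_def rearrangements_def)
      from Ncoef_condition_iff_dvd[OF nu this] show ?thesis
        by simp
    qed
    have "Ncoef k n nu lam mu = card {(w, w'). w \<in> min_reps k lam \<and> w' \<in> min_reps k mu \<and>
        (\<forall>i\<in>{1..k}. n dvd lam (w i) + mu (w' i) + (n - nu i))}"
      unfolding Ncoef_def using cond by (intro arg_cong[where f = card] Collect_cong split_cong refl) blast
    also have "{(w, w'). w \<in> min_reps k lam \<and> w' \<in> min_reps k mu \<and>
        (\<forall>i\<in>{1..k}. n dvd lam (w i) + mu (w' i) + (n - nu i))} = {p \<in> min_reps k lam \<times> min_reps k mu. ?D (?f p)}"
      by auto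
    finally show ?thesis .
  qed
  moreover have "{q \<in> rearrangements k lam \<times> rearrangements k mu. ?D q} =
      {(\<beta>, \<gamma>) \<in> rearrangements k lam \<times> rearrangements k mu. \<forall>i\<in>{1..k}. n dvd \<beta> i + \<gamma> i + (n - nu i)}"
    by auto
  ultimately show ?thesis
    by simp
qed

lemma monsym_powers:
  "monsym k lam (\<lambda>i. z ^ \<alpha> i) = (\<Sum>\<beta>\<in>rearrangements k lam. \<Prod>i=1..k. z ^ (\<alpha> i * \<beta> i))"
  by (simp add: monsym_def rearrangements_def power_mult)

lemma rearrangement_dvd_iff_eq:
  assumes rho: "rho \<in> Akn k n" and nu: "nu \<in> Akn k n" and \<beta>: "\<beta> \<in> rearrangements k rho"
  shows "(\<forall>i\<in>{1..k}. n dvd \<beta> i + (n - nu i)) \<longleftrightarrow> \<beta> = nu"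
proof
  assume dvd: "\<forall>i\<in>{1..k}. n dvd \<beta> i + (n - nu i)"
  show "\<beta> = nu"
  proof
    fix i
    show "\<beta> i = nu i"
    proof (cases "i \<in> {1..k}")
      case True
      have "0 < \<beta> i" "\<beta> i \<le> n" "0 < nu i" "nu i \<le> n"
        using rearrangementsD(1)[OF rho \<beta> True] AknD(1)[OF nu True] by auto
      moreover obtain q where q: "\<beta> i + (n - nu i) = n * q"
        using dvd True by blast
      ultimately have "0 < n * q" "n * q < n * 2"
        by linarith+
      then have "0 < q" "q < 2"
        by simp_all
      then have "q = 1"
        by linarith
      then show ?thesis
        using q \<open>nu i \<le> n\<close> by simp
    qed (simp add: rearrangementsD(2)[OF rho \<beta>] AknD(3)[OF nu])
  qed
qed (use AknD(1)[OF nu] in auto)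

text \<open>Twisting by \<open>\<zeta>^(\<alpha> i (n - nu i)) = \<zeta>^(-\<alpha> i nu i)\<close> and summing over \<open>\<alpha>\<close> extracts the coefficient of
  the monomial \<open>x^nu\<close> modulo \<open>x_i^n = 1\<close>.\<close>
lemma sum_monsym_twisted:
  fixes \<zeta> :: complex
  assumes n: "1 \<le> n" "\<zeta> ^ n = 1" "\<forall>j. 0 < j \<and> j < n \<longrightarrow> \<zeta> ^ j \<noteq> 1"
    and rho: "rho \<in> Akn k n" and nu: "nu \<in> Akn k n"
  shows "(\<Sum>\<alpha>\<in>residue_vectors {1..k} n. monsym k rho (\<lambda>i. \<zeta> ^ \<alpha> i) * (\<Prod>i=1..k. \<zeta> ^ (\<alpha> i * (n - nu i))))
         = (if rho = nu then of_nat n ^ k else 0)"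
proof -
  have "(\<Sum>\<alpha>\<in>residue_vectors {1..k} n. monsym k rho (\<lambda>i. \<zeta> ^ \<alpha> i) * (\<Prod>i=1..k. \<zeta> ^ (\<alpha> i * (n - nu i))))
      = (\<Sum>\<alpha>\<in>residue_vectors {1..k} n. \<Sum>\<beta>\<in>rearrangements k rho. \<Prod>i=1..k. \<zeta> ^ (\<alpha> i * (\<beta> i + (n - nu i))))"
    unfolding monsym_powers
    by (simp add: sum_distrib_right prod.distrib[symmetric] power_add[symmetric] distrib_left)
  also have "\<dots> = (\<Sum>\<beta>\<in>rearrangements k rho. \<Sum>\<alpha>\<in>residue_vectors {1..k} n. \<Prod>i=1..k. \<zeta> ^ (\<alpha> i * (\<beta> i + (n - nu i))))"
    by (rule sum.swap)
  also have "\<dots> = (\<Sum>\<beta>\<in>rearrangements k rho. if \<beta> = nu then of_nat n ^ k else 0)"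
    using sum_residue_vectors_primitive_root[OF n] rearrangement_dvd_iff_eq[OF rho nu] by simp
  also have "\<dots> = (if rho = nu then of_nat n ^ k else 0)"
    using finite_rearrangements self_in_rearrangements rearrangements_Akn_eq[OF rho nu] by auto
  finally show ?thesis .
qed

lemma sum_monsym_product_twisted:
  fixes \<zeta> :: complex
  assumes n: "1 \<le> n" "\<zeta> ^ n = 1" "\<forall>j. 0 < j \<and> j < n \<longrightarrow> \<zeta> ^ j \<noteq> 1"
    and lam: "lam \<in> Akn k n" and mu: "mu \<in> Akn k n" and nu: "nu \<in> Akn k n"
  shows "(\<Sum>\<alpha>\<in>residue_vectors {1..k} n. monsym k lam (\<lambda>i. \<zeta> ^ \<alpha> i) * monsym k mu (\<lambda>i. \<zeta> ^ \<alpha> i) *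
            (\<Prod>i=1..k. \<zeta> ^ (\<alpha> i * (n - nu i))))
         = of_nat (Ncoef k n nu lam mu) * of_nat n ^ k"
proof -
  let ?R = "rearrangements k lam \<times> rearrangements k mu"
  let ?P = "\<lambda>(\<beta>, \<gamma>). \<forall>i\<in>{1..k}. n dvd \<beta> i + \<gamma> i + (n - nu i)"
  have "monsym k lam (\<lambda>i. \<zeta> ^ \<alpha> i) * monsym k mu (\<lambda>i. \<zeta> ^ \<alpha> i) * (\<Prod>i=1..k. \<zeta> ^ (\<alpha> i * (n - nu i)))
      = (\<Sum>(\<beta>, \<gamma>)\<in>?R. \<Prod>i=1..k. \<zeta> ^ (\<alpha> i * (\<beta> i + \<gamma> i + (n - nu i))))" for \<alpha>
  proof -
    have "monsym k lam (\<lambda>i. \<zeta> ^ \<alpha> i) * monsym k mu (\<lambda>i. \<zeta> ^ \<alpha> i) * (\<Prod>i=1..k. \<zeta> ^ (\<alpha> i * (n - nu i)))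
      = (\<Sum>\<beta>\<in>rearrangements k lam. \<Sum>\<gamma>\<in>rearrangements k mu. (\<Prod>i=1..k. \<zeta> ^ (\<alpha> i * \<beta> i)) *
          (\<Prod>i=1..k. \<zeta> ^ (\<alpha> i * \<gamma> i)) * (\<Prod>i=1..k. \<zeta> ^ (\<alpha> i * (n - nu i))))"
      unfolding monsym_powers sum_product by (simp add: sum_distrib_right)
    also have "\<dots> = (\<Sum>(\<beta>, \<gamma>)\<in>?R. \<Prod>i=1..k. \<zeta> ^ (\<alpha> i * (\<beta> i + \<gamma> i + (n - nu i))))"
      by (simp add: sum.cartesian_product prod.distrib[symmetric] power_add[symmetric] distrib_left)
    finally show ?thesis .
  qed
  then have "(\<Sum>\<alpha>\<in>residue_vectors {1..k} n. monsym k lam (\<lambda>i. \<zeta> ^ \<alpha> i) * monsym k mu (\<lambda>i. \<zeta> ^ \<alpha> i) *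
            (\<Prod>i=1..k. \<zeta> ^ (\<alpha> i * (n - nu i))))
      = (\<Sum>\<alpha>\<in>residue_vectors {1..k} n. \<Sum>(\<beta>, \<gamma>)\<in>?R. \<Prod>i=1..k. \<zeta> ^ (\<alpha> i * (\<beta> i + \<gamma> i + (n - nu i))))"
    by simp
  also have "\<dots> = (\<Sum>(\<beta>, \<gamma>)\<in>?R. \<Sum>\<alpha>\<in>residue_vectors {1..k} n. \<Prod>i=1..k. \<zeta> ^ (\<alpha> i * (\<beta> i + \<gamma> i + (n - nu i))))"
    unfolding case_prod_unfold by (rule sum.swap)
  also have "\<dots> = (\<Sum>p\<in>?R. if ?P p then of_nat n ^ k else 0)"
    using sum_residue_vectors_primitive_root[OF n] by (simp add: case_prod_unfold)
  also have "\<dots> = of_nat (card {p\<in>?R. ?P p}) * of_nat n ^ k"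
    using finite_rearrangements by (simp add: sum.If_cases Int_def)
  finally show ?thesis
    using Ncoef_eq_card_rearrangements[OF lam mu nu] by (simp add: case_prod_unfold mem_Times_iff)
qed

lemma Ncoef_eq_of_character_identity:
  fixes \<zeta> :: complex and a b :: nat and c f :: "'a \<Rightarrow> nat" and sh :: "'a \<Rightarrow> nat \<Rightarrow> nat"
  assumes n: "1 \<le> n" "\<zeta> ^ n = 1" "\<forall>j. 0 < j \<and> j < n \<longrightarrow> \<zeta> ^ j \<noteq> 1"
    and lam: "lam \<in> Akn k n" and mu: "mu \<in> Akn k n" and nu: "nu \<in> Akn k n"
    and "finite M" and sh: "\<And>T. T \<in> M \<Longrightarrow> sh T \<in> Akn k n"
    and char: "\<And>\<alpha>. \<alpha> \<in> residue_vectors {1..k} n \<Longrightarrow>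
      of_nat a * monsym k lam (\<lambda>i. \<zeta> ^ \<alpha> i) * (of_nat b * monsym k mu (\<lambda>i. \<zeta> ^ \<alpha> i)) =
      (\<Sum>T\<in>M. of_nat (c T * f T) * monsym k (sh T) (\<lambda>i. \<zeta> ^ \<alpha> i))"
  shows "a * b * Ncoef k n nu lam mu = (\<Sum>T\<in>{T\<in>M. sh T = nu}. c T * f T)"
proof -
  let ?G = "residue_vectors {1..k} n"
  let ?W = "\<lambda>\<alpha>. \<Prod>i=1..k. \<zeta> ^ (\<alpha> i * (n - nu i))"
  have "of_nat (a * b * Ncoef k n nu lam mu) * of_nat n ^ k
      = of_nat a * of_nat b * (\<Sum>\<alpha>\<in>?G. monsym k lam (\<lambda>i. \<zeta> ^ \<alpha> i) * monsym k mu (\<lambda>i. \<zeta> ^ \<alpha> i) * ?W \<alpha>)"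
    using sum_monsym_product_twisted[OF n lam mu nu] by simp
  also have "\<dots> = (\<Sum>\<alpha>\<in>?G. (of_nat a * monsym k lam (\<lambda>i. \<zeta> ^ \<alpha> i) * (of_nat b * monsym k mu (\<lambda>i. \<zeta> ^ \<alpha> i))) * ?W \<alpha>)"
    by (simp add: sum_distrib_left mult_ac)
  also have "\<dots> = (\<Sum>\<alpha>\<in>?G. \<Sum>T\<in>M. of_nat (c T * f T) * (monsym k (sh T) (\<lambda>i. \<zeta> ^ \<alpha> i) * ?W \<alpha>))"
    using char by (simp add: sum_distrib_right mult.assoc)
  also have "\<dots> = (\<Sum>T\<in>M. of_nat (c T * f T) * (\<Sum>\<alpha>\<in>?G. monsym k (sh T) (\<lambda>i. \<zeta> ^ \<alpha> i) * ?W \<alpha>))"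
    by (subst sum.swap) (simp add: sum_distrib_left)
  also have "\<dots> = (\<Sum>T\<in>M. of_nat (c T * f T) * (if sh T = nu then of_nat n ^ k else 0))"
    using sum_monsym_twisted[OF n sh nu] by simp
  also have "\<dots> = (\<Sum>T\<in>M. if sh T = nu then of_nat (c T * f T) * of_nat n ^ k else 0)"
    by (intro sum.cong) auto
  also have "\<dots> = (\<Sum>T\<in>{T\<in>M. sh T = nu}. of_nat (c T * f T) * of_nat n ^ k)"
    using \<open>finite M\<close> by (rule sum.inter_filter[symmetric])
  also have "\<dots> = of_nat (\<Sum>T\<in>{T\<in>M. sh T = nu}. c T * f T) * of_nat n ^ k"
    by (simp add: sum_distrib_right)
  finally show ?thesis
    using n(1) by (simp only: mult_cancel_right power_eq_0_iff of_nat_eq_0_iff of_nat_eq_iff) simp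
qed

theorem mainTheorem11:
  fixes k n :: nat and \<zeta> :: complex
    and L :: "(nat \<Rightarrow> nat list) \<Rightarrow> rep"
    and c :: "(nat \<Rightarrow> nat list) \<Rightarrow> (nat \<Rightarrow> nat list) \<Rightarrow> (nat \<Rightarrow> nat list) \<Rightarrow> nat"
    and lam mu nu :: "nat \<Rightarrow> nat"
    and P Q :: "nat \<Rightarrow> nat list"
  assumes k: "1 \<le> k" and n: "1 \<le> n"
    and zeta_root: "\<zeta> ^ n = 1" and zeta_prim: "\<forall>j. 0 < j \<and> j < n \<longrightarrow> \<zeta> ^ j \<noteq> 1"
    and L_irr: "\<forall>R\<in>multipartitions n k. irreducible_rep n k (L R)"
    and L_distinct: "\<forall>R\<in>multipartitions n k. \<forall>S\<in>multipartitions n k.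
                       iso_rep n k (L R) (L S) \<longrightarrow> R = S"
    and L_complete: "\<forall>V. irreducible_rep n k V \<longrightarrow> (\<exists>R\<in>multipartitions n k. iso_rep n k V (L R))"
    and L_trace: "\<forall>R\<in>multipartitions n k. \<forall>\<rho>\<in>Akn k n. \<forall>\<alpha>.
                    has_shape k n R \<rho> \<and> (\<forall>i\<in>{1..k}. \<alpha> i < n) \<and> (\<forall>i. i \<notin> {1..k} \<longrightarrow> \<alpha> i = 0) \<longrightarrow>
                    mat_trace (snd (L R) (ypow \<alpha>)) = of_nat (fmulti n R) * monsym k \<rho> (\<lambda>i. \<zeta> ^ \<alpha> i)"
    and c_struct: "\<forall>R\<in>multipartitions n k. \<forall>S\<in>multipartitions n k.
                    \<exists>xs. set xs \<subseteq> multipartitions n k \<and>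
                         (\<forall>T\<in>multipartitions n k. count_list xs T = c R S T) \<and>
                         iso_rep n k (tensor_rep (L R) (L S)) (dsum_list (map L xs))"
    and lam: "lam \<in> Akn k n" and mu: "mu \<in> Akn k n" and nu: "nu \<in> Akn k n"
    and P: "P \<in> multipartitions n k" and P_shape: "has_shape k n P lam"
    and Q: "Q \<in> multipartitions n k" and Q_shape: "has_shape k n Q mu"
  shows "real (Ncoef k n nu lam mu) =
         (\<Sum>T\<in>{T \<in> multipartitions n k. has_shape k n T nu}.
            real (c P Q T) * real (fmulti n T) / (real (fmulti n P) * real (fmulti n Q)))"
proof -
  \<comment> \<open>Only traces at the elements \<open>y^\<alpha>\<close> enter.\<close>
  let ?M = "multipartitions n k"
  have trace: "mat_trace (snd (L T) (ypow \<alpha>)) = of_nat (fmulti n T) * monsym k (shape_of k n T) (\<lambda>i. \<zeta> ^ \<alpha> i)"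
    if "T \<in> ?M" "\<alpha> \<in> residue_vectors {1..k} n" for T \<alpha>
    using L_trace shape_of[OF that(1)] that by (auto simp: residue_vectors_def)
  obtain xs where xs: "set xs \<subseteq> ?M" "\<forall>T\<in>?M. count_list xs T = c P Q T"
    "iso_rep n k (tensor_rep (L P) (L Q)) (dsum_list (map L xs))"
    using c_struct P Q by blast
  have "fmulti n P * fmulti n Q * Ncoef k n nu lam mu = (\<Sum>T\<in>{T\<in>?M. shape_of k n T = nu}. c P Q T * fmulti n T)"
  proof (rule Ncoef_eq_of_character_identity[OF n zeta_root zeta_prim lam mu nu finite_multipartitions])
    show "shape_of k n T \<in> Akn k n" if "T \<in> ?M" for T
      using shape_of(1)[OF that] .
    fix \<alpha> assume \<alpha>: "\<alpha> \<in> residue_vectors {1..k} n"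
    then have "ypow \<alpha> \<in> Snk n k"
      by (auto simp: residue_vectors_def ypow_def Snk_def permutes_id)
    from mat_trace_tensor_decomposition[OF _ finite_multipartitions xs P Q this]
    show "of_nat (fmulti n P) * monsym k lam (\<lambda>i. \<zeta> ^ \<alpha> i) * (of_nat (fmulti n Q) * monsym k mu (\<lambda>i. \<zeta> ^ \<alpha> i)) =
        (\<Sum>T\<in>?M. of_nat (c P Q T * fmulti n T) * monsym k (shape_of k n T) (\<lambda>i. \<zeta> ^ \<alpha> i))"
      using L_irr trace[OF _ \<alpha>] shape_of_eqI[OF P lam P_shape] shape_of_eqI[OF Q mu Q_shape] P Q
      by (simp add: irreducible_rep_def mult.assoc)
  qed
  moreover have "{T\<in>?M. shape_of k n T = nu} = {T\<in>?M. has_shape k n T nu}"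
    using shape_of(2) shape_of_eqI[OF _ nu] by blast
  moreover have "fmulti n R \<noteq> 0" if "R \<in> ?M" for R
    using mat_trace_ypow_zero_neq_0[of n k "L R"] L_irr trace[OF that, of "\<lambda>_. 0"] that n
    by (auto simp: residue_vectors_def)
  ultimately show ?thesis
    using P Q by (simp add: sum_divide_distrib[symmetric] field_simps flip: of_nat_mult of_nat_sum)
qed

end
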